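(* Let $n\geq 3$, $d\geq 2$ and $\ell\in\textup{int}(C_n)$. The map $\varphi_d:M_d(\ell)\to M_{d+1}(\ell)$ is surjective if and only if $d\geq n-1$.
   Context: $C_n$ is the set of $\ell=(l_1,\ldots,l_n)\in\mathbb{R}^n$ with $l_i>0$ and $l_i\leq\sum_{j\neq i}l_j$ for all $i$; $\textup{int}(C_n)$ is its interior. $V_d(\ell)=\{(\mathbf{v}_1,\ldots,\mathbf{v}_{n-1})\in(\mathbb{R}^d)^{n-1} : \|\mathbf{v}_i-\mathbf{v}_{i-1}\|=l_i,\ i=1,\ldots,n\}$ with $\mathbf{v}_0=\mathbf{v}_n=\mathbf{0}$; $M_d(\ell)=V_d(\ell)/SO(d)$ with $SO(d)$ acting diagonally, $[P]$ the class of $P$. For a fixed linear Euclidean isometry $f_d:\mathbb{R}^d\to\mathbb{R}^{d+1}$, $F_d(\mathbf{v}_1,\ldots,\mathbf{v}_{n-1})=(f_d(\mathbf{v}_1),\ldots,f_d(\mathbf{v}_{n-1}))$ and $\varphi_d([P])=[F_d(P)]$. *)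

theory Defs
  imports "HOL-Analysis.Analysis"
begin

text \<open>Side lengths l = (l_1,...,l_n) are represented as l :: nat => real, only the
values l 1, ..., l n matter.  Interior of C_n: all l_i > 0 and strict polygon inequalities.\<close>
definition int_C :: "nat \<Rightarrow> (nat \<Rightarrow> real) \<Rightarrow> bool" where
  "int_C n l \<longleftrightarrow> (\<forall>i\<in>{1..n}. 0 < l i \<and> l i < (\<Sum>j\<in>{1..n} - {i}. l j))"

text \<open>Closed polygons in a Euclidean space: a polygon is a vertex sequence v with
v 0 = v n = 0 (and v i = 0 for i >= n, for extensionality); the free vertices are
v 1, ..., v (n-1).\<close>
definition polygon_space :: "nat \<Rightarrow> (nat \<Rightarrow> real) \<Rightarrow> (nat \<Rightarrow> 'a::euclidean_space) set" where
  "polygon_space n l = {v. v 0 = 0 \<and> (\<forall>i\<ge>n. v i = 0) \<and>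
                          (\<forall>i\<in>{1..n}. dist (v i) (v (i - 1)) = l i)}"

definition SO :: "(real^'d^'d) set" where
  "SO = {A. orthogonal_matrix A \<and> det A = 1}"

definition so_rel :: "nat \<Rightarrow> (nat \<Rightarrow> real) \<Rightarrow> ((nat \<Rightarrow> real^'d) \<times> (nat \<Rightarrow> real^'d)) set" where
  "so_rel n l = {(P, Q). P \<in> polygon_space n l \<and> Q \<in> polygon_space n l \<and>
                          (\<exists>A\<in>SO. Q = (\<lambda>i. A *v P i))}"

definition moduli_space :: "nat \<Rightarrow> (nat \<Rightarrow> real) \<Rightarrow> (nat \<Rightarrow> real^'d) set set" where
  "moduli_space n l = polygon_space n l // so_rel n l"

definition lin_isometry :: "('a::real_normed_vector \<Rightarrow> 'b::real_normed_vector) \<Rightarrow> bool" where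
  "lin_isometry f \<longleftrightarrow> linear f \<and> (\<forall>x. norm (f x) = norm x)"

definition phi :: "nat \<Rightarrow> (nat \<Rightarrow> real) \<Rightarrow> (real^'d \<Rightarrow> real^'e)
                   \<Rightarrow> (nat \<Rightarrow> real^'d) set \<Rightarrow> (nat \<Rightarrow> real^'e) set" where
  "phi n l f X = the_elem ((\<lambda>P. so_rel n l `` {(\<lambda>i. f (P i))}) ` X)"

end

theory Submission
  imports Defs
begin

text \<open>Every orthogonal map \<open>A\<close> of \<open>\<real>\<^sup>d\<close> extends to a rotation \<open>B\<close> of \<open>\<real>\<^sup>d\<^sup>+\<^sup>1\<close> with
  \<open>B \<circ> f = f \<circ> A\<close> (act by \<open>\<plusminus>1\<close> on the normal line of the hyperplane \<open>f(\<real>\<^sup>d)\<close>), so \<open>\<phi>\<^sub>d\<close> sends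
  the class of \<open>Q\<close> to the class of \<open>f \<circ> Q\<close>, and a class is hit iff one of its representatives
  lies in \<open>f(\<real>\<^sup>d)\<close>, i.e. iff its vertices span a proper subspace.
  The \<open>n - 1\<close> free vertices span at most \<open>n - 1\<close> dimensions, so for \<open>d \<ge> n - 1\<close> every
  polygon can be rotated into \<open>f(\<real>\<^sup>d)\<close>. Conversely, for \<open>d + 1 \<le> n - 1\<close> there is a closed
  polygon with side lengths \<open>l\<close> spanning \<open>\<real>\<^sup>d\<^sup>+\<^sup>1\<close>: merge two sides that are not the longest
  into one side of a length that keeps the polygon inequalities strict, build a spanning polygon
  for the shorter length vector by induction, and split the merged side again into two sides
  leaving the previous span.\<close>

lemma SO_mat_1: "mat 1 \<in> SO"
  by (simp add: SO_def orthogonal_matrix_id det_I)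

lemma SO_transpose: "A \<in> SO \<Longrightarrow> transpose A \<in> SO"
  by (simp add: SO_def orthogonal_matrix_transpose det_transpose)

lemma SO_mult: "A \<in> SO \<Longrightarrow> B \<in> SO \<Longrightarrow> A ** B \<in> SO"
  by (simp add: SO_def orthogonal_matrix_mul det_mul)

lemma equiv_so_rel: "equiv (polygon_space n l) (so_rel n l :: ((nat \<Rightarrow> real^'d) \<times> _) set)"
proof (rule equivI)
  show "refl_on (polygon_space n l) (so_rel n l :: ((nat \<Rightarrow> real^'d) \<times> _) set)"
    by (rule refl_onI) (auto simp: so_rel_def intro!: bexI[OF _ SO_mat_1])
  show "sym (so_rel n l :: ((nat \<Rightarrow> real^'d) \<times> _) set)"
  proof (rule symI)
    fix P Q :: "nat \<Rightarrow> real^'d"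
    assume "(P, Q) \<in> so_rel n l"
    then obtain A where A: "A \<in> SO" "Q = (\<lambda>i. A *v P i)" and "P \<in> polygon_space n l" "Q \<in> polygon_space n l"
      by (auto simp: so_rel_def)
    moreover have "P = (\<lambda>i. transpose A *v Q i)"
      using A by (simp add: SO_def orthogonal_matrix_def matrix_vector_mul_assoc)
    ultimately show "(Q, P) \<in> so_rel n l"
      unfolding so_rel_def using SO_transpose by blast
  qed
  show "trans (so_rel n l :: ((nat \<Rightarrow> real^'d) \<times> _) set)"
  proof (rule transI)
    fix P Q R :: "nat \<Rightarrow> real^'d"
    assume "(P, Q) \<in> so_rel n l" "(Q, R) \<in> so_rel n l"
    then obtain A B where "A \<in> SO" "B \<in> SO" "Q = (\<lambda>i. A *v P i)" "R = (\<lambda>i. B *v Q i)"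
      and "P \<in> polygon_space n l" "R \<in> polygon_space n l"
      by (auto simp: so_rel_def)
    then show "(P, R) \<in> so_rel n l"
      unfolding so_rel_def by (auto simp: matrix_vector_mul_assoc intro!: bexI[OF _ SO_mult])
  qed
qed (auto simp: so_rel_def)

lemma lin_isometry_orthogonal_matrix:
  fixes A :: "real^'n^'n"
  shows "orthogonal_matrix A \<Longrightarrow> lin_isometry (\<lambda>x. A *v x)"
  using orthogonal_transformation_matrix[of "\<lambda>x. A *v x"]
  by (simp add: lin_isometry_def orthogonal_transformation matrix_vector_mul_linear)

lemma lin_isometry_inner:
  fixes f :: "'a::real_inner \<Rightarrow> 'b::real_inner"
  assumes "lin_isometry f"
  shows "f x \<bullet> f y = x \<bullet> y"
proof -
  have f: "linear f" "\<And>x. norm (f x) = norm x"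
    using assms by (auto simp: lin_isometry_def)
  have "\<And>x. f x \<bullet> f x = x \<bullet> x"
    using f(2) by (metis power2_norm_eq_inner)
  from this[of "x + y"] this[of x] this[of y] show ?thesis
    by (simp add: linear_add[OF f(1)] inner_add inner_commute)
qed

lemma lin_isometry_dist:
  "lin_isometry f \<Longrightarrow> dist (f x) (f y) = dist x y"
  by (simp add: lin_isometry_def dist_norm linear_diff[symmetric])

lemma lin_isometry_adjoint_cancel:
  fixes f :: "'a::euclidean_space \<Rightarrow> 'b::euclidean_space"
  assumes "lin_isometry f"
  shows "adjoint f (f x) = x"
proof -
  have "y \<bullet> adjoint f (f x) = y \<bullet> x" for y
    using assms adjoint_works lin_isometry_inner
    by (metis lin_isometry_def)
  from this[of "adjoint f (f x) - x"] have "(adjoint f (f x) - x) \<bullet> (adjoint f (f x) - x) = 0"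
    by (simp add: inner_diff_right)
  then show ?thesis
    by simp
qed

lemma comp_lin_isometry_in_polygon_space_iff:
  assumes "lin_isometry f"
  shows "f \<circ> P \<in> polygon_space n l \<longleftrightarrow> P \<in> polygon_space n l"
proof -
  have "f x = 0 \<longleftrightarrow> x = 0" for x
    using assms by (metis lin_isometry_def norm_eq_zero)
  then show ?thesis
    using lin_isometry_dist[OF assms] by (simp add: polygon_space_def)
qed

lemma unit_orthogonal_to_subspace_exists:
  fixes S :: "'a::euclidean_space set"
  assumes "dim S < DIM('a)"
  obtains u where "norm u = 1" "\<And>v. v \<in> span S \<Longrightarrow> v \<bullet> u = 0"
proof -
  obtain x where "x \<noteq> 0" "\<And>y. y \<in> span S \<Longrightarrow> orthogonal x y"
    using orthogonal_to_subspace_exists[OF assms] by blast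
  then show ?thesis
    by (intro that[of "x /\<^sub>R norm x"]) (auto simp: orthogonal_def inner_commute)
qed

lemma lin_isometry_unit_normal_exists:
  fixes f :: "'a::euclidean_space \<Rightarrow> 'b::euclidean_space"
  assumes "lin_isometry f" "DIM('b) = DIM('a) + 1"
  obtains w where "norm w = 1" "\<And>y. f y \<bullet> w = 0"
proof -
  have "dim (range f) < DIM('b)"
    using assms dim_image_le[of f UNIV] by (simp add: lin_isometry_def)
  then obtain w where "norm w = 1" "\<And>v. v \<in> span (range f) \<Longrightarrow> v \<bullet> w = 0"
    by (rule unit_orthogonal_to_subspace_exists) auto
  then show ?thesis
    by (metis that span_base rangeI)
qed

lemma lin_isometry_decomposition:
  fixes f :: "'a::euclidean_space \<Rightarrow> 'b::euclidean_space"
  assumes f: "lin_isometry f" and dim: "DIM('b) = DIM('a) + 1"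
    and w: "norm w = 1" "\<And>y. f y \<bullet> w = 0"
  shows "x = f (adjoint f x) + (x \<bullet> w) *\<^sub>R w"
proof -
  have lf: "linear f"
    using f by (simp add: lin_isometry_def)
  have ww: "w \<bullet> w = 1"
    using w(1) by (simp add: norm_eq_1)
  have "inj f"
    by (metis f inj_on_inverseI lin_isometry_adjoint_cancel)
  then have "dim (range f) = DIM('a)"
    using dim_image_eq[OF lf] by (simp add: inj_on_def)
  moreover have "w \<notin> span (range f)"
  proof
    assume "w \<in> span (range f)"
    then have "orthogonal w w"
      by (rule orthogonal_to_span) (auto simp: orthogonal_def inner_commute[of w] w(2))
    then show False
      using ww by (simp add: orthogonal_def)
  qed
  ultimately have "dim (insert w (range f)) = DIM('b)"
    using dim by (simp add: dim_insert)
  then have span_UNIV: "span (insert w (range f)) = UNIV"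
    by (simp add: dim_eq_full)
  define r where "r = x - f (adjoint f x) - (x \<bullet> w) *\<^sub>R w"
  have "f y \<bullet> r = 0" for y
    using w(2)[of y] adjoint_works[OF lf, of y x] lin_isometry_inner[OF f, of y "adjoint f x"]
    by (simp add: r_def inner_diff_right inner_commute)
  moreover have "w \<bullet> r = 0"
    using w(2)[of "adjoint f x"] ww by (simp add: r_def inner_diff_right inner_commute)
  ultimately have "orthogonal r v" if "v \<in> insert w (range f)" for v
    using that by (auto simp: orthogonal_def inner_commute)
  then have "orthogonal r r"
    using orthogonal_to_span span_UNIV by blast
  then have "r = 0"
    by (simp add: orthogonal_def)
  then show ?thesis
    by (simp add: r_def algebra_simps)
qed

lemma rotoinversion_fixing_coordinate_hyperplane_exists:
  fixes k :: "'n::finite"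
  obtains D :: "real^'n^'n" where "rotoinversion_matrix D" "\<And>u. u $ k = 0 \<Longrightarrow> D *v u = u"
proof -
  define c where "c i = (if i = k then -1 else 1 :: real)" for i
  define D :: "real^'n^'n" where "D = (\<chi> i j. if i = j then c i else 0)"
  have D_apply: "(D *v u) $ i = c i * u $ i" for u i
    by (simp add: D_def matrix_vector_mult_def if_distrib[of "\<lambda>x. x * _"] cong: if_cong)
  have "D ** D = mat 1"
    unfolding matrix_eq by (simp add: vec_eq_iff flip: matrix_vector_mul_assoc add: D_apply c_def)
  moreover have "transpose D = D"
    by (simp add: D_def vec_eq_iff transpose_def)
  moreover have "det D = prod c UNIV"
    by (subst det_diagonal) (simp_all add: D_def)
  then have "det D = -1"
    by (simp add: c_def prod.If_cases)
  ultimately have "rotoinversion_matrix D"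
    by (simp add: rotoinversion_matrix_def orthogonal_matrix_def)
  moreover have "D *v u = u" if "u $ k = 0" for u
    using that by (simp add: vec_eq_iff D_apply c_def)
  ultimately show ?thesis
    by (rule that)
qed

lemma rotoinversion_fixing_hyperplane_exists:
  fixes w :: "real^'n"
  assumes "norm w = 1"
  obtains S where "rotoinversion_matrix S" "\<And>v. v \<bullet> w = 0 \<Longrightarrow> S *v v = v"
proof -
  obtain k :: 'n where True
    by simp
  obtain A where A: "orthogonal_matrix A" "A *v axis k 1 = w"
    using orthogonal_matrix_exists_basis[OF assms] by blast
  obtain D :: "real^'n^'n" where D: "rotoinversion_matrix D" "\<And>u. u $ k = 0 \<Longrightarrow> D *v u = u"
    using rotoinversion_fixing_coordinate_hyperplane_exists[of k] by blast
  have "orthogonal_matrix (A ** D ** transpose A)"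
    using A(1) D(1) by (intro orthogonal_matrix_mul) (simp_all add: orthogonal_matrix_transpose rotoinversion_matrix_def)
  moreover have "det (A ** D ** transpose A) = -1"
    using det_orthogonal_matrix[OF A(1)] D(1) by (auto simp: det_mul det_transpose rotoinversion_matrix_def)
  moreover have "(A ** D ** transpose A) *v v = v" if "v \<bullet> w = 0" for v
  proof -
    have "(transpose A *v v) $ k = (transpose A *v v) \<bullet> axis k 1"
      by (simp add: inner_axis)
    also have "\<dots> = v \<bullet> w"
      using A(2) by (simp add: vector_transpose_matrix dot_lmul_matrix)
    finally have "D *v (transpose A *v v) = transpose A *v v"
      using that D(2) by simp
    then show ?thesis
      using A(1) by (metis matrix_vector_mul_assoc matrix_vector_mul_lid orthogonal_matrix_def)
  qed
  ultimately show ?thesis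
    using that by (auto simp: rotoinversion_matrix_def)
qed

lemma norm_lin_isometry_add_normal:
  fixes f :: "'a::real_inner \<Rightarrow> 'b::real_inner"
  assumes f: "lin_isometry f" and w: "norm w = 1" "\<And>y. f y \<bullet> w = 0"
  shows "norm (f u + c *\<^sub>R w) ^ 2 = norm u ^ 2 + c ^ 2"
proof -
  have "(f u + c *\<^sub>R w) \<bullet> (f u + c *\<^sub>R w) = u \<bullet> u + c * c"
    using w(2)[of u] w(1) by (simp add: inner_add inner_commute lin_isometry_inner[OF f] norm_eq_1)
  then show ?thesis
    by (metis power2_norm_eq_inner power2_eq_square)
qed

lemma lin_isometry_extend_orthogonal_matrix:
  fixes f :: "real^'d \<Rightarrow> real^'e" and A :: "real^'d^'d"
  assumes f: "lin_isometry f" and dim: "CARD('e) = CARD('d) + 1" and A: "orthogonal_matrix A"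
    and w: "norm w = 1" "\<And>y. f y \<bullet> w = 0"
  obtains B where "orthogonal_matrix B" "\<And>y. B *v f y = f (A *v y)"
proof -
  have lf: "linear f"
    using f by (simp add: lin_isometry_def)
  define g where "g = adjoint f"
  have lg: "linear g"
    unfolding g_def by (rule adjoint_linear[OF lf])
  define b where "b x = f (A *v g x) + (x \<bullet> w) *\<^sub>R w" for x
  have lb: "linear b"
    unfolding b_def using lf lg
    by (intro linearI) (simp_all add: linear_add linear_scale matrix_vector_right_distrib
        matrix_vector_mult_scaleR inner_add_left algebra_simps)
  moreover have "norm (b x) = norm x" for x
  proof -
    have "x = f (g x) + (x \<bullet> w) *\<^sub>R w"
      unfolding g_def using lin_isometry_decomposition[OF f _ w] dim by simp
    then have "norm x ^ 2 = norm (g x) ^ 2 + (x \<bullet> w) ^ 2"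
      by (metis norm_lin_isometry_add_normal[OF f w])
    moreover have "norm (b x) ^ 2 = norm (g x) ^ 2 + (x \<bullet> w) ^ 2"
      unfolding b_def using norm_lin_isometry_add_normal[OF f w] lin_isometry_orthogonal_matrix[OF A]
      by (simp add: lin_isometry_def)
    ultimately show ?thesis
      by (metis norm_ge_zero power2_eq_imp_eq)
  qed
  ultimately have "orthogonal_transformation b"
    by (simp add: orthogonal_transformation)
  then have "orthogonal_matrix (matrix b)"
    by (simp add: orthogonal_transformation_matrix)
  moreover have "matrix b *v x = b x" for x
    by (simp add: matrix_vector_mul(2)[OF lb])
  moreover have "b (f y) = f (A *v y)" for y
    using w(2) lin_isometry_adjoint_cancel[OF f] by (simp add: b_def g_def)
  ultimately show ?thesis
    using that by metis
qed

lemma lin_isometry_extend_SO: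
  fixes f :: "real^'d \<Rightarrow> real^'e" and A :: "real^'d^'d"
  assumes f: "lin_isometry f" and dim: "CARD('e) = CARD('d) + 1" and A: "orthogonal_matrix A"
  obtains B where "B \<in> SO" "\<And>y. B *v f y = f (A *v y)"
proof -
  obtain w where w: "norm w = 1" "\<And>y. f y \<bullet> w = 0"
    using lin_isometry_unit_normal_exists[OF f] dim by auto
  obtain B where B: "orthogonal_matrix B" "\<And>y. B *v f y = f (A *v y)"
    using lin_isometry_extend_orthogonal_matrix[OF f dim A w] by blast
  obtain S where S: "rotoinversion_matrix S" "\<And>v. v \<bullet> w = 0 \<Longrightarrow> S *v v = v"
    using rotoinversion_fixing_hyperplane_exists[OF w(1)] by blast
  txt \<open>If \<open>B\<close> reverses orientation, compose it with the reflection in \<open>w\<close>,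
    which fixes the range of \<open>f\<close>.\<close>
  consider "det B = 1" | "det B = -1"
    using det_orthogonal_matrix[OF B(1)] by blast
  then show ?thesis
  proof cases
    case 1
    then show ?thesis
      using that B by (simp add: SO_def)
  next
    case 2
    have "B ** S \<in> SO"
      using B(1) S(1) 2 by (simp add: SO_def rotoinversion_matrix_def orthogonal_matrix_mul det_mul)
    moreover have "(B ** S) *v f y = f (A *v y)" for y
      using B(2) S(2) w(2) by (simp flip: matrix_vector_mul_assoc)
    ultimately show ?thesis
      using that by blast
  qed
qed

lemma so_rel_comp_lin_isometry:
  fixes f :: "real^'d \<Rightarrow> real^'e"
  assumes f: "lin_isometry f" and dim: "CARD('e) = CARD('d) + 1" and PQ: "(P, Q) \<in> so_rel n l"
  shows "(f \<circ> P, f \<circ> Q) \<in> so_rel n l"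
proof -
  obtain A where "A \<in> SO" "Q = (\<lambda>i. A *v P i)" and P: "P \<in> polygon_space n l" and Q: "Q \<in> polygon_space n l"
    using PQ by (auto simp: so_rel_def)
  obtain B where "B \<in> SO" "\<And>y. B *v f y = f (A *v y)"
    using lin_isometry_extend_SO[OF f dim, of A] \<open>A \<in> SO\<close> by (auto simp: SO_def)
  then have "f \<circ> Q = (\<lambda>i. B *v (f \<circ> P) i)"
    using \<open>Q = _\<close> by auto
  moreover have "f \<circ> P \<in> polygon_space n l" "f \<circ> Q \<in> polygon_space n l"
    using P Q comp_lin_isometry_in_polygon_space_iff[OF f] by blast+
  ultimately show ?thesis
    using \<open>B \<in> SO\<close> unfolding so_rel_def by blast
qed

lemma phi_class:
  fixes f :: "real^'d \<Rightarrow> real^'e"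
  assumes f: "lin_isometry f" and dim: "CARD('e) = CARD('d) + 1" and Q: "Q \<in> polygon_space n l"
  shows "phi n l f (so_rel n l `` {Q}) = so_rel n l `` {f \<circ> Q}"
proof -
  have "so_rel n l `` {f \<circ> Q} = so_rel n l `` {f \<circ> P}" if "P \<in> so_rel n l `` {Q}" for P
    using that so_rel_comp_lin_isometry[OF f dim] by (auto intro!: equiv_class_eq[OF equiv_so_rel])
  moreover have "Q \<in> so_rel n l `` {Q}"
    by (rule equiv_class_self[OF equiv_so_rel Q])
  ultimately have "(\<lambda>P. so_rel n l `` {f \<circ> P}) ` (so_rel n l `` {Q}) = {so_rel n l `` {f \<circ> Q}}"
    by blast
  then show ?thesis
    by (simp add: phi_def comp_def)
qed

lemma phi_surjective_iff:
  fixes f :: "real^'d \<Rightarrow> real^'e"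
  assumes f: "lin_isometry f" and dim: "CARD('e) = CARD('d) + 1"
  shows "phi n l f ` (moduli_space n l :: (nat \<Rightarrow> real^'d) set set) = moduli_space n l \<longleftrightarrow>
    (\<forall>P \<in> polygon_space n l. \<exists>Q \<in> polygon_space n l. (f \<circ> Q, P) \<in> so_rel n l)"
proof -
  have moduli: "moduli_space n l = (\<lambda>P. so_rel n l `` {P}) ` polygon_space n l"
    for n l and P :: "nat \<Rightarrow> real^'c"
    by (auto simp: moduli_space_def quotient_def)
  have image: "phi n l f ` (moduli_space n l :: (nat \<Rightarrow> real^'d) set set) =
      (\<lambda>Q. so_rel n l `` {f \<circ> Q}) ` polygon_space n l"
    unfolding moduli image_image using phi_class[OF f dim] by (rule image_cong[OF refl])
  have "(\<lambda>Q. so_rel n l `` {f \<circ> Q}) ` polygon_space n l \<subseteq> moduli_space n l"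
    unfolding moduli using comp_lin_isometry_in_polygon_space_iff[OF f] by blast
  then have "phi n l f ` (moduli_space n l :: (nat \<Rightarrow> real^'d) set set) = moduli_space n l \<longleftrightarrow>
      moduli_space n l \<subseteq> (\<lambda>Q. so_rel n l `` {f \<circ> Q}) ` polygon_space n l"
    unfolding image by blast
  also have "\<dots> \<longleftrightarrow> (\<forall>P \<in> polygon_space n l. \<exists>Q \<in> polygon_space n l. so_rel n l `` {P} = so_rel n l `` {f \<circ> Q})"
    unfolding moduli by blast
  also have "\<dots> \<longleftrightarrow> (\<forall>P \<in> polygon_space n l. \<exists>Q \<in> polygon_space n l. (f \<circ> Q, P) \<in> so_rel n l)"
    using comp_lin_isometry_in_polygon_space_iff[OF f] equiv_class_eq_iff[OF equiv_so_rel]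
    by (metis (no_types, lifting))
  finally show ?thesis .
qed

definition strict_polygon_lengths :: "'i set \<Rightarrow> ('i \<Rightarrow> real) \<Rightarrow> bool" where
  "strict_polygon_lengths I a \<longleftrightarrow> (\<forall>i\<in>I. 0 < a i \<and> a i < sum a (I - {i}))"

definition closed_chain :: "'i set \<Rightarrow> ('i \<Rightarrow> real) \<Rightarrow> ('i \<Rightarrow> 'a::real_normed_vector) \<Rightarrow> bool" where
  "closed_chain I a E \<longleftrightarrow> (\<forall>i\<in>I. norm (E i) = a i) \<and> sum E I = 0"

lemma int_C_iff_strict_polygon_lengths: "int_C n l \<longleftrightarrow> strict_polygon_lengths {1..n} l"
  by (simp add: int_C_def strict_polygon_lengths_def)

lemma strict_polygon_lengths_iff:
  "finite I \<Longrightarrow> strict_polygon_lengths I a \<longleftrightarrow> (\<forall>i\<in>I. 0 < a i \<and> 2 * a i < sum a I)"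
  by (auto simp: strict_polygon_lengths_def sum_diff1)

lemma vector_split_triangle:
  fixes D z :: "'a::real_inner"
  assumes z: "norm z = 1" "D \<bullet> z = 0" and ab: "\<bar>a - b\<bar> < norm D" "norm D < a + b"
  obtains x y where "norm x = a" "norm y = b" "x + y = D" "x \<bullet> z \<noteq> 0"
proof -
  define t where "t = norm D"
  have t: "0 < t" "0 < a" "0 < b"
    using ab by (auto simp: t_def abs_less_iff)
  txt \<open>By the law of cosines, \<open>\<alpha>\<close> is the component of \<open>x\<close> along \<open>D / t\<close>.\<close>
  define \<alpha> where "\<alpha> = (a\<^sup>2 - b\<^sup>2 + t\<^sup>2) / (2 * t)"
  have "(a - t - b) * (a - t + b) < 0" "0 < (a + t - b) * (a + t + b)"
    using ab t by (auto simp: t_def intro: mult_neg_pos mult_pos_pos)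
  then have "\<bar>\<alpha>\<bar> < a"
    using t by (auto simp: \<alpha>_def abs_less_iff divide_less_eq less_divide_eq algebra_simps power2_eq_square)
  then have "0 < (a - \<alpha>) * (a + \<alpha>)"
    by (intro mult_pos_pos) (auto simp: abs_less_iff)
  then have pos: "0 < a\<^sup>2 - \<alpha>\<^sup>2"
    by (simp add: algebra_simps power2_eq_square)
  define \<beta> where "\<beta> = sqrt (a\<^sup>2 - \<alpha>\<^sup>2)"
  have \<beta>: "0 < \<beta>" "\<beta>\<^sup>2 = a\<^sup>2 - \<alpha>\<^sup>2"
    using pos by (simp_all add: \<beta>_def)
  have DD: "D \<bullet> D = t\<^sup>2" and zz: "z \<bullet> z = 1" and zD: "z \<bullet> D = 0"
    using z by (simp_all add: t_def power2_norm_eq_inner norm_eq_1 inner_commute)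
  define x where "x = (\<alpha> / t) *\<^sub>R D + \<beta> *\<^sub>R z"
  have xx: "x \<bullet> x = a\<^sup>2"
    using t DD zz zD z(2) \<beta>(2) by (simp add: x_def inner_add_left inner_add_right power2_eq_square field_simps)
  have Dx: "2 * (D \<bullet> x) = a\<^sup>2 - b\<^sup>2 + t\<^sup>2"
    using t DD z(2) by (simp add: x_def \<alpha>_def inner_add_right power2_eq_square)
  have "(D - x) \<bullet> (D - x) = b\<^sup>2"
    using DD xx Dx by (simp add: inner_diff_left inner_diff_right inner_commute)
  then have "norm x = a" "norm (D - x) = b"
    using xx t by (simp_all add: norm_eq_sqrt_inner)
  moreover have "x \<bullet> z \<noteq> 0"
    using z(2) zz \<beta>(1) by (simp add: x_def inner_add_left)
  ultimately show ?thesis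
    using that[of x "D - x"] by simp
qed

lemma sum_fun_upd_split:
  fixes E :: "'i \<Rightarrow> 'a::ab_group_add"
  assumes "finite I" "p \<in> I" "q \<notin> I" "x + y = E p"
  shows "sum (E(p := x, q := y)) (insert q I) = sum E I"
proof -
  have "sum (E(p := x, q := y)) I = sum (E(p := x)) I"
    using assms by (intro sum.cong) auto
  then have "sum (E(p := x, q := y)) (insert q I) = y + sum (E(p := x)) I"
    using assms by simp
  also have "\<dots> = y + (x + sum E (I - {p}))"
    using assms by (simp add: sum.remove)
  also have "\<dots> = sum E I"
    using assms by (simp add: sum_diff1 algebra_simps)
  finally show ?thesis .
qed

lemma dim_fun_upd_split:
  fixes E :: "'i \<Rightarrow> 'a::euclidean_space"
  assumes "p \<in> I" "q \<notin> I" "x + y = E p"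
  shows "dim (insert x (E ` I)) \<le> dim ((E(p := x, q := y)) ` insert q I)"
proof -
  have xy: "x \<in> (E(p := x, q := y)) ` insert q I" "y \<in> (E(p := x, q := y)) ` insert q I"
    using assms by (auto intro!: image_eqI)
  then have "E p \<in> span ((E(p := x, q := y)) ` insert q I)"
    unfolding assms(3)[symmetric] by (intro span_add span_base)
  moreover have "E i \<in> (E(p := x, q := y)) ` insert q I" if "i \<in> I" "i \<noteq> p" for i
    using that assms by (auto intro!: image_eqI[of _ _ i])
  ultimately have "E ` I \<subseteq> span ((E(p := x, q := y)) ` insert q I)"
    using span_base by blast
  then have "insert x (E ` I) \<subseteq> span ((E(p := x, q := y)) ` insert q I)"
    using xy(1) by (simp add: span_base)
  then show ?thesis
    by (rule dim_mono)
qed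

lemma closed_chain_split_edge:
  fixes E :: "'i \<Rightarrow> 'a::euclidean_space"
  assumes I: "finite I" "p \<in> I" "q \<notin> I" and E: "closed_chain I (a(p := t)) E"
    and ab: "\<bar>a p - a q\<bar> < t" "t < a p + a q" and DIM: "2 \<le> DIM('a)"
  obtains E' :: "'i \<Rightarrow> 'a" where "closed_chain (insert q I) a E'"
    "min (dim (E ` I) + 1) DIM('a) \<le> dim (E' ` insert q I)"
proof -
  have t: "norm (E p) = t"
    using E I by (simp add: closed_chain_def)
  obtain z where z: "norm z = 1" "E p \<bullet> z = 0"
    and z_span: "dim (E ` I) < DIM('a) \<Longrightarrow> v \<in> span (E ` I) \<Longrightarrow> v \<bullet> z = 0" for v
  proof (cases "dim (E ` I) < DIM('a)")
    case True
    then obtain z where "norm z = 1" "\<And>v. v \<in> span (E ` I) \<Longrightarrow> v \<bullet> z = 0"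
      by (rule unit_orthogonal_to_subspace_exists) auto
    moreover have "E p \<in> span (E ` I)"
      using I by (simp add: span_base)
    ultimately show ?thesis
      by (intro that) simp_all
  next
    case False
    obtain z where "z \<noteq> 0" "E p \<bullet> z = 0"
      using orthogonal_to_vector_exists[OF DIM] by (metis orthogonal_def)
    then show ?thesis
      using False that[of "z /\<^sub>R norm z"] by simp
  qed
  obtain x y where xy: "norm x = a p" "norm y = a q" "x + y = E p" "x \<bullet> z \<noteq> 0"
    using vector_split_triangle[OF z] ab t by metis
  define E' where "E' = E(p := x, q := y)"
  have "closed_chain (insert q I) a E'"
    using E I xy sum_fun_upd_split[where E = E, OF I xy(3)] by (auto simp: closed_chain_def E'_def)
  moreover have "min (dim (E ` I) + 1) DIM('a) \<le> dim (insert x (E ` I))"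
  proof (cases "dim (E ` I) < DIM('a)")
    case True
    then have "x \<notin> span (E ` I)"
      using z_span xy(4) by blast
    then show ?thesis
      by (simp add: dim_insert min_le_iff_disj)
  next
    case False
    have "dim (E ` I) \<le> dim (insert x (E ` I))"
      by (rule dim_subset) auto
    then show ?thesis
      using False by (simp add: min_le_iff_disj)
  qed
  then have "min (dim (E ` I) + 1) DIM('a) \<le> dim (E' ` insert q I)"
    unfolding E'_def by (rule order_trans[OF _ dim_fun_upd_split[where E = E, OF I(2,3) xy(3)]])
  ultimately show ?thesis
    by (rule that)
qed

text \<open>Among the remaining edges only a longest one, \<open>M\<close>, bounds the merged length \<open>t\<close> from below.\<close>
lemma strict_polygon_lengths_merge_two_edges:
  assumes fin: "finite I" and strict: "strict_polygon_lengths I a"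
    and pq: "p \<in> I" "q \<in> I" "p \<noteq> q" and M: "M \<in> I - {p, q}" "\<And>i. i \<in> I \<Longrightarrow> a i \<le> a M"
    and K: "I - {p, q, M} \<noteq> {}"
  obtains t where "\<bar>a p - a q\<bar> < t" "t < a p + a q" "strict_polygon_lengths (I - {q}) (a(p := t))"
proof -
  have strict': "0 < a i" "2 * a i < sum a I" if "i \<in> I" for i
    using strict that by (auto simp: strict_polygon_lengths_iff[OF fin])
  define S where "S = sum a (I - {p, q})"
  have "S = a M + sum a (I - {p, q} - {M})"
    unfolding S_def using fin M(1) by (intro sum.remove) auto
  moreover have "I - {p, q} - {M} = I - {p, q, M}"
    by auto
  moreover have "0 < sum a (I - {p, q, M})"
    using fin K strict' by (intro sum_pos) auto
  ultimately have "a M < S"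
    by simp
  have "sum a I = a p + sum a (I - {p})"
    using fin pq by (intro sum.remove) auto
  also have "sum a (I - {p}) = a q + sum a (I - {p} - {q})"
    using fin pq by (intro sum.remove) auto
  also have "I - {p} - {q} = I - {p, q}"
    by auto
  finally have sum_I: "sum a I = a p + a q + S"
    by (simp add: S_def)
  define lo where "lo = max \<bar>a p - a q\<bar> (2 * a M - S)"
  define hi where "hi = min (a p + a q) S"
  have "lo < hi"
    using strict'[OF pq(1)] strict'[OF pq(2)] strict'[of M] M M(2)[OF pq(1)] M(2)[OF pq(2)] \<open>a M < S\<close> sum_I
    by (auto simp: lo_def hi_def abs_less_iff)
  moreover have "\<bar>a p - a q\<bar> \<le> lo" "2 * a M - S \<le> lo" "hi \<le> a p + a q" "hi \<le> S"
    by (simp_all add: lo_def hi_def)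
  ultimately obtain t where t: "\<bar>a p - a q\<bar> < t" "t < a p + a q" "2 * a M - S < t" "t < S"
    using dense[OF \<open>lo < hi\<close>] by (metis order.strict_trans1 order.strict_trans2)
  have "sum (a(p := t)) (I - {q}) = t + sum (a(p := t)) (I - {q} - {p})"
    using fin pq sum.remove[of "I - {q}" p "a(p := t)"] by simp
  also have "sum (a(p := t)) (I - {q} - {p}) = S"
    unfolding S_def by (intro sum.cong) auto
  finally have "0 < (a(p := t)) i \<and> 2 * (a(p := t)) i < sum (a(p := t)) (I - {q})"
    if "i \<in> I - {q}" for i
    using that t strict' M(2)[of i] by auto
  then have "strict_polygon_lengths (I - {q}) (a(p := t))"
    using fin by (simp add: strict_polygon_lengths_iff)
  then show ?thesis
    by (rule that[OF t(1,2)])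
qed

lemma strict_polygon_lengths_merge_edges:
  assumes fin: "finite I" and card: "4 \<le> card I" and strict: "strict_polygon_lengths I a"
  obtains p q t where "p \<in> I" "q \<in> I" "p \<noteq> q" "\<bar>a p - a q\<bar> < t" "t < a p + a q"
    "strict_polygon_lengths (I - {q}) (a(p := t))"
proof -
  have "Max (a ` I) \<in> a ` I"
    using fin card by (intro Max_in) auto
  then obtain M where "M \<in> I" "a M = Max (a ` I)"
    by auto
  then have M: "M \<in> I" "\<And>i. i \<in> I \<Longrightarrow> a i \<le> a M"
    using fin by auto
  have "3 \<le> card (I - {M})"
    using card M by simp
  then obtain T where "T \<subseteq> I - {M}" "card T = 3"
    by (rule obtain_subset_with_card_n)
  then obtain p q r where "{p, q, r} \<subseteq> I - {M}" "p \<noteq> q" "p \<noteq> r" "q \<noteq> r"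
    by (auto simp: card_3_iff)
  then have pq: "p \<in> I" "q \<in> I" "p \<noteq> q" and "M \<in> I - {p, q}" "I - {p, q, M} \<noteq> {}"
    using M(1) by auto
  then obtain t where "\<bar>a p - a q\<bar> < t" "t < a p + a q" "strict_polygon_lengths (I - {q}) (a(p := t))"
    using strict_polygon_lengths_merge_two_edges[OF fin strict pq _ M(2)] by blast
  with pq show ?thesis
    by (rule that)
qed

lemma closed_chain_two_edges_exists:
  assumes "p \<noteq> s" "0 < a s" "a p = a s"
  obtains E :: "'i \<Rightarrow> 'a::euclidean_space" where "closed_chain {p, s} a E" "1 \<le> dim (E ` {p, s})"
proof -
  obtain u :: 'a where u: "u \<in> Basis"
    using nonempty_Basis by blast
  define D where "D = a s *\<^sub>R u"
  define E where "E i = (if i = p then D else - D)" for i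
  have "closed_chain {p, s} a E"
    using u assms by (simp add: closed_chain_def E_def D_def)
  moreover have "D \<noteq> 0"
    using u assms by (simp add: D_def nonzero_Basis)
  then have "\<not> E ` {p, s} \<subseteq> {0}"
    by (simp add: E_def)
  then have "1 \<le> dim (E ` {p, s})"
    using dim_eq_0[of "E ` {p, s}"] by linarith
  ultimately show ?thesis
    by (rule that)
qed

lemma closed_chain_exists:
  fixes a :: "'i \<Rightarrow> real"
  assumes "finite I" "3 \<le> card I" "strict_polygon_lengths I a" and DIM: "2 \<le> DIM('a)"
  obtains E :: "'i \<Rightarrow> 'a::euclidean_space" where "closed_chain I a E" "min (card I - 1) DIM('a) \<le> dim (E ` I)"
  using assms(1-3)
proof (induction "card I" arbitrary: I a thesis rule: less_induct)
  case less
  txt \<open>Reduce to a chain on \<open>J = I - {q}\<close> in which edge \<open>p\<close> stands for edges \<open>p\<close> and \<open>q\<close> together.\<close>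
  obtain J p q t and E :: "'i \<Rightarrow> 'a" where J: "finite J" "p \<in> J" "q \<notin> J" "insert q J = I"
    and t: "\<bar>a p - a q\<bar> < t" "t < a p + a q" and E: "closed_chain J (a(p := t)) E"
    and dim_E: "min (card I - 1) DIM('a) \<le> min (dim (E ` J) + 1) DIM('a)"
  proof (cases "card I = 3")
    case True
    then obtain p q s where I: "I = {p, q, s}" and distinct: "p \<noteq> q" "q \<noteq> s" "p \<noteq> s"
      by (auto simp: card_3_iff)
    have "\<forall>i\<in>I. 0 < a i \<and> 2 * a i < a p + a q + a s"
      using less.prems(4) distinct by (simp add: strict_polygon_lengths_iff I)
    then have ab: "\<bar>a p - a q\<bar> < a s" "a s < a p + a q" "0 < a s"
      by (auto simp: I abs_less_iff)
    txt \<open>Split edge \<open>p\<close> of a degenerate chain on the two edges \<open>p\<close>, \<open>s\<close>.\<close>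
    obtain E :: "'i \<Rightarrow> 'a" where chain: "closed_chain {p, s} (a(p := a s)) E"
      and "1 \<le> dim (E ` {p, s})"
      by (rule closed_chain_two_edges_exists[of p s "a(p := a s)"]) (use distinct ab(3) in auto)
    then have "min (card I - 1) DIM('a) \<le> min (dim (E ` {p, s}) + 1) DIM('a)"
      using True by (simp add: min_def)
    then show ?thesis
      by (rule that[of "{p, s}" p q "a s" E, rotated -1]) (use chain ab distinct I in auto)
  next
    case False
    then have "4 \<le> card I"
      using less.prems(3) by linarith
    then obtain p q t where pq: "p \<in> I" "q \<in> I" "p \<noteq> q"
      and t: "\<bar>a p - a q\<bar> < t" "t < a p + a q" and strict: "strict_polygon_lengths (I - {q}) (a(p := t))"
      using strict_polygon_lengths_merge_edges less.prems(2,4) by blast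
    have card: "card (I - {q}) = card I - 1"
      using less.prems(2) pq by simp
    obtain E :: "'i \<Rightarrow> 'a" where chain: "closed_chain (I - {q}) (a(p := t)) E"
      and dim_E: "min (card (I - {q}) - 1) DIM('a) \<le> dim (E ` (I - {q}))"
      by (rule less.hyps[of "I - {q}" "a(p := t)"]) (use card \<open>4 \<le> card I\<close> less.prems(2) strict in auto)
    have "min (card I - 1) DIM('a) \<le> min (dim (E ` (I - {q})) + 1) DIM('a)"
      using dim_E card \<open>4 \<le> card I\<close> by (auto simp: min_le_iff_disj)
    then show ?thesis
      by (rule that[of "I - {q}" p q t E, rotated -1]) (use chain less.prems(2) pq t in auto)
  qed
  obtain E' :: "'i \<Rightarrow> 'a" where "closed_chain (insert q J) a E'"
    and "min (dim (E ` J) + 1) DIM('a) \<le> dim (E' ` insert q J)"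
    by (rule closed_chain_split_edge[OF J(1-3) E t DIM])
  then show ?case
    unfolding J(4) by (intro less.prems(1)) (use dim_E in auto)
qed

lemma polygon_of_closed_chain:
  fixes E :: "nat \<Rightarrow> 'a::euclidean_space"
  assumes E: "closed_chain {1..n} l E"
  obtains P :: "nat \<Rightarrow> 'a" where "P \<in> polygon_space n l" "dim (E ` {1..n}) \<le> dim (range P)"
proof -
  define P where "P i = (if i < n then sum E {1..i} else 0)" for i
  have edge: "P i - P (i - 1) = E i" if "i \<in> {1..n}" for i
  proof (cases "i < n")
    case True
    then show ?thesis
      using that by (cases i) (simp_all add: P_def sum.cl_ivl_Suc)
  next
    case False
    then have "i = n" "sum E {1..n} = 0"
      using that E by (auto simp: closed_chain_def)
    then show ?thesis
      using that by (cases n) (auto simp: P_def sum.cl_ivl_Suc add_eq_0_iff)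
  qed
  have "P \<in> polygon_space n l"
    using E edge by (simp add: polygon_space_def P_def dist_norm closed_chain_def)
  moreover have "E ` {1..n} \<subseteq> span (range P)"
  proof (rule image_subsetI)
    fix i
    assume "i \<in> {1..n}"
    then show "E i \<in> span (range P)"
      using edge by (metis rangeI span_base span_diff)
  qed
  ultimately show ?thesis
    using dim_mono that by blast
qed

lemma polygon_space_spanning_exists:
  assumes "3 \<le> n" "int_C n l" "2 \<le> DIM('a)" "DIM('a) \<le> n - 1"
  obtains P :: "nat \<Rightarrow> 'a::euclidean_space" where "P \<in> polygon_space n l" "dim (range P) = DIM('a)"
proof -
  have "strict_polygon_lengths {1..n} l"
    using assms(2) by (simp add: int_C_iff_strict_polygon_lengths)
  then obtain E :: "nat \<Rightarrow> 'a" where E: "closed_chain {1..n} l E"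
    and "min (card {1..n} - 1) DIM('a) \<le> dim (E ` {1..n})"
    using closed_chain_exists[of "{1..n}" l] assms(1,3) by auto
  then have "DIM('a) \<le> dim (E ` {1..n})"
    using assms(4) by simp
  moreover obtain P :: "nat \<Rightarrow> 'a" where "P \<in> polygon_space n l" "dim (E ` {1..n}) \<le> dim (range P)"
    using polygon_of_closed_chain[OF E] .
  moreover have "dim (range P) \<le> DIM('a)"
    by (rule dim_subset_UNIV)
  ultimately show ?thesis
    using that by simp
qed

lemma dim_range_polygon_le:
  fixes P :: "nat \<Rightarrow> 'a::euclidean_space"
  assumes "P \<in> polygon_space n l"
  shows "dim (range P) \<le> n - 1"
proof -
  have "range P \<subseteq> span (P ` {1..<n})"
  proof
    fix v assume "v \<in> range P"
    then obtain i where "v = P i"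
      by blast
    moreover have "P i = 0" if "i = 0 \<or> n \<le> i"
      using assms that by (auto simp: polygon_space_def)
    ultimately show "v \<in> span (P ` {1..<n})"
      by (cases "i = 0 \<or> n \<le> i") (auto intro: span_base span_zero)
  qed
  then have "dim (range P) \<le> card (P ` {1..<n})"
    by (rule dim_le_card) simp
  also have "\<dots> \<le> n - 1"
    using card_image_le[of "{1..<n}" P] by simp
  finally show ?thesis .
qed

lemma so_rel_comp_imp_dim_range_le:
  fixes f :: "real^'d \<Rightarrow> real^'e"
  assumes "linear f" "(f \<circ> Q, P) \<in> so_rel n l"
  shows "dim (range P) \<le> CARD('d)"
proof -
  obtain A where "P = (\<lambda>i. A *v f (Q i))"
    using assms(2) by (auto simp: so_rel_def)
  then have "range P \<subseteq> range (\<lambda>y. A *v f y)"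
    by auto
  then have "dim (range P) \<le> dim (range (\<lambda>y. A *v f y))"
    by (rule dim_subset)
  also have "\<dots> \<le> dim (UNIV :: (real^'d) set)"
    using assms(1) by (intro dim_image_le linear_compose[OF _ matrix_vector_mul_linear, unfolded o_def])
  finally show ?thesis
    by simp
qed

lemma exists_so_rel_comp_if_dim_range_less:
  fixes f :: "real^'d \<Rightarrow> real^'e"
  assumes f: "lin_isometry f" and dim: "CARD('e) = CARD('d) + 1"
    and P: "P \<in> polygon_space n l" "dim (range P) < CARD('e)"
  obtains Q where "Q \<in> polygon_space n l" "(f \<circ> Q, P) \<in> so_rel n l"
proof -
  have "dim (range P) < DIM(real^'e)"
    using P(2) by simp
  then obtain u where u: "norm u = 1" "\<And>v. v \<in> span (range P) \<Longrightarrow> v \<bullet> u = 0"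
    by (rule unit_orthogonal_to_subspace_exists) auto
  obtain w where w: "norm w = 1" "\<And>y. f y \<bullet> w = 0"
    using lin_isometry_unit_normal_exists[OF f] dim by auto
  txt \<open>Rotate \<open>P\<close> into the hyperplane orthogonal to \<open>w\<close>, which is the range of \<open>f\<close>.\<close>
  obtain r where r: "orthogonal_transformation r" "det (matrix r) = 1" "r u = w"
    using rotation_exists[of u w] u(1) w(1) dim by auto
  define Q where "Q = adjoint f \<circ> r \<circ> P"
  have "r (P i) \<bullet> w = 0" for i
    using r(1) u(2)[OF span_base[OF rangeI]] unfolding r(3)[symmetric]
    by (simp add: orthogonal_transformation_def)
  then have "f (adjoint f (r (P i))) = r (P i)" for i
    using lin_isometry_decomposition[OF f _ w, of "r (P i)"] dim by simp
  moreover have "linear r"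
    using r(1) by (simp add: orthogonal_transformation)
  ultimately have fQ: "f \<circ> Q = (\<lambda>i. matrix r *v P i)"
    by (simp add: fun_eq_iff Q_def matrix_vector_mul(2))
  have R: "orthogonal_matrix (matrix r)" "matrix r \<in> SO"
    using r(1,2) by (simp_all add: SO_def orthogonal_transformation_matrix)
  have "(\<lambda>i. matrix r *v P i) \<in> polygon_space n l"
    using comp_lin_isometry_in_polygon_space_iff[OF lin_isometry_orthogonal_matrix[OF R(1)]] P(1)
    by (simp add: comp_def)
  then have PQ: "(P, f \<circ> Q) \<in> so_rel n l"
    unfolding so_rel_def fQ using P(1) R(2) by blast
  have "sym (so_rel n l :: ((nat \<Rightarrow> real^'e) \<times> _) set)"
    using equiv_so_rel by (rule equivE)
  then have "(f \<circ> Q, P) \<in> so_rel n l"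
    using PQ by (rule symD)
  moreover have "Q \<in> polygon_space n l"
    using \<open>(\<lambda>i. matrix r *v P i) \<in> polygon_space n l\<close> comp_lin_isometry_in_polygon_space_iff[OF f]
    unfolding fQ[symmetric] by blast
  ultimately show ?thesis
    by (rule that[rotated])
qed

theorem proposition5p1:
  fixes n :: nat and l :: "nat \<Rightarrow> real" and f :: "real^'d \<Rightarrow> real^'e"
  assumes "n \<ge> 3" and "CARD('d) \<ge> 2" and "CARD('e) = CARD('d) + 1"
    and "int_C n l" and "lin_isometry f"
  shows "(phi n l f ` (moduli_space n l :: (nat \<Rightarrow> real^'d) set set) = moduli_space n l)
         \<longleftrightarrow> CARD('d) \<ge> n - 1"
  unfolding phi_surjective_iff[OF assms(5,3)]
proof
  assume lift: "\<forall>P \<in> polygon_space n l. \<exists>Q \<in> polygon_space n l. (f \<circ> Q, P) \<in> so_rel n l"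
  show "n - 1 \<le> CARD('d)"
  proof (rule ccontr)
    assume "\<not> n - 1 \<le> CARD('d)"
    then have "2 \<le> DIM(real^'e)" "DIM(real^'e) \<le> n - 1"
      using assms(2,3) by simp_all
    then obtain P :: "nat \<Rightarrow> real^'e" where "P \<in> polygon_space n l" "dim (range P) = DIM(real^'e)"
      by (rule polygon_space_spanning_exists[OF assms(1,4)])
    then show False
      using lift so_rel_comp_imp_dim_range_le[of f] assms(3,5) by (force simp: lin_isometry_def)
  qed
next
  assume "n - 1 \<le> CARD('d)"
  then have "dim (range P) < CARD('e)" if "P \<in> polygon_space n l" for P :: "nat \<Rightarrow> real^'e"
    using dim_range_polygon_le[OF that] assms(3) by linarith
  then show "\<forall>P \<in> polygon_space n l. \<exists>Q \<in> polygon_space n l. (f \<circ> Q, P) \<in> so_rel n l"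
    using exists_so_rel_comp_if_dim_range_less[OF assms(5,3)] by metis
qed

end
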